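(* Consider a two-tier downlink network in $\mathbb{R}^2$ in which the tier-1 (macro) base stations form a homogeneous Poisson point process $\Phi_1$ of density $\lambda_1>0$ and the tier-2 (small cell) base stations form an independent homogeneous Poisson point process $\Phi_2$ of density $\lambda_2>0$, with tier-$k$ transmit power $P_k>0$ and path loss exponent $\alpha_k>0$. A typical user is at the origin and $D_k$ is the distance to the nearest point of $\Phi_k$. Let $B_1>B_2>0$ and define the events $u\in u_1\iff P_1D_1^{-\alpha_1}\ge P_2B_1D_2^{-\alpha_2}$; $u\in u_D\iff P_2B_1D_2^{-\alpha_2}>P_1D_1^{-\alpha_1}\ge P_2B_2D_2^{-\alpha_2}$; $u\in u_{\bar D}\iff P_2B_2D_2^{-\alpha_2}>P_1D_1^{-\alpha_1}$, with probabilities $A_l=\mathbb{P}(u\in u_l)$. A user in $u_1$ is served by its nearest tier-1 base station, and a user in $u_D$ or $u_{\bar D}$ by its nearest tier-2 base station. For $l\in\{1,D,\bar D\}$ let $G_l$ be the distance from the typical user to its serving base station conditioned on $u\in u_l$ (i.e. $G_1$ is $D_1$ conditioned on $u\in u_1$, and $G_D$, $G_{\bar D}$ are $D_2$ conditioned on $u\in u_D$, $u\in u_{\bar D}$ respectively). Then for $x>0$ the probability density functions are $$f_{G_1}(x)=\frac{2\pi\lambda_1}{A_1}x\exp\left(-\pi\lambda_1x^2-\pi\lambda_2\left(\frac{P_2B_1}{P_1}\right)^{2/\alpha_2}x^{2\alpha_1/\alpha_2}\right),$$ $$f_{G_{\bar D}}(x)=\frac{2\pi\lambda_2}{A_{\bar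 D}}x\exp\left(-\pi\lambda_1\left(\frac{P_1}{P_2B_2}\right)^{2/\alpha_1}x^{2\alpha_2/\alpha_1}-\pi\lambda_2x^2\right),$$ $$f_{G_D}(x)=\frac{2\pi\lambda_2}{A_D}x\left\{\exp\left(-\pi\lambda_1\left(\frac{P_1}{P_2B_1}\right)^{2/\alpha_1}x^{2\alpha_2/\alpha_1}-\pi\lambda_2x^2\right)-\exp\left(-\pi\lambda_1\left(\frac{P_1}{P_2B_2}\right)^{2/\alpha_1}x^{2\alpha_2/\alpha_1}-\pi\lambda_2x^2\right)\right\}.$$
   Context: $u_1$ = macro users, $u_D$ = users offloaded to small cells by extra cell range expansion, $u_{\bar D}$ = original small cell users; association is by maximum biased received power. *)

theory Defs
  imports "HOL-Probability.Probability"
begin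

definition pcount :: "(real^2) set \<Rightarrow> (real^2) set \<Rightarrow> nat" where
  "pcount S A = card (S \<inter> A)"

definition homogeneous_PPP :: "'w measure \<Rightarrow> real \<Rightarrow> ('w \<Rightarrow> (real^2) set) \<Rightarrow> bool" where
  "homogeneous_PPP M lam Phi \<longleftrightarrow>
     prob_space M \<and>
     (\<forall>\<omega>\<in>space M. \<forall>K. bounded K \<longrightarrow> finite (Phi \<omega> \<inter> K)) \<and>
     (\<forall>A. A \<in> sets lborel \<and> bounded A \<longrightarrow>
        (\<lambda>\<omega>. pcount (Phi \<omega>) A) \<in> measurable M (count_space UNIV) \<and>
        (\<forall>n. measure M {\<omega>\<in>space M. pcount (Phi \<omega>) A = n} =
              (lam * measure lborel A) ^ n / fact n * exp (- (lam * measure lborel A)))) \<and>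
     (\<forall>(I::nat set) A. finite I \<longrightarrow> (\<forall>i\<in>I. A i \<in> sets lborel \<and> bounded (A i)) \<longrightarrow>
        disjoint_family_on A I \<longrightarrow>
        prob_space.indep_vars M (\<lambda>_. count_space UNIV) (\<lambda>i \<omega>. pcount (Phi \<omega>) (A i)) I)"

definition indep_PP :: "'w measure \<Rightarrow> ('w \<Rightarrow> (real^2) set) \<Rightarrow> ('w \<Rightarrow> (real^2) set) \<Rightarrow> bool" where
  "indep_PP M Phi1 Phi2 \<longleftrightarrow>
     (\<forall>(I::nat set) (J::nat set) A B. finite I \<longrightarrow> finite J \<longrightarrow>
        (\<forall>i\<in>I. A i \<in> sets lborel \<and> bounded (A i)) \<longrightarrow>
        (\<forall>j\<in>J. B j \<in> sets lborel \<and> bounded (B j)) \<longrightarrow>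
        prob_space.indep_var M
          (PiM I (\<lambda>_. count_space UNIV)) (\<lambda>\<omega>. \<lambda>i\<in>I. pcount (Phi1 \<omega>) (A i))
          (PiM J (\<lambda>_. count_space UNIV)) (\<lambda>\<omega>. \<lambda>j\<in>J. pcount (Phi2 \<omega>) (B j)))"

definition nearest_dist :: "(real^2) set \<Rightarrow> real" where
  "nearest_dist S = infdist 0 S"

end

theory Submission
  imports Defs "HOL-Real_Asymp.Real_Asymp"
begin

text \<open>The void probability of the disc of radius r gives P(D_k > r) = exp(-pi lam_k r^2), so D_k
  follows the Rayleigh law with density 2 pi lam_k r exp(-pi lam_k r^2), and independence of the
  two processes makes (D_1, D_2) distributed as the product of the two Rayleigh laws. Each
  association event has the form {(D_1, D_2) \<in> S} for a region S bounded by power-law curves.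
  By Fubini, the joint density of the serving distance and the event at x is the Rayleigh density
  of the serving tier times the probability that the other distance lies in the section of S at x,
  which is a Rayleigh tail (or a difference of two) at a power of x; dividing by the probability
  of the event gives the conditional density.\<close>

section \<open>Void probabilities and the nearest distance\<close>

lemma measure_cball_zero_real2: "r \<ge> 0 \<Longrightarrow> measure lborel (cball (0::real^2) r) = pi * r^2"
  by (simp add: content_cball_conv_ball circle_area)

lemma nearest_dist_nonneg: "nearest_dist S \<ge> 0"
  by (simp add: nearest_dist_def infdist_nonneg)

text \<open>Local finiteness makes the infimum defining the nearest distance a minimum.\<close>
lemma less_nearest_dist_iff:
  assumes locfin: "\<And>K. bounded K \<Longrightarrow> finite (S \<inter> K)" and r: "r \<ge> 0"
  shows "r < nearest_dist S \<longleftrightarrow> S \<noteq> {} \<and> S \<inter> cball 0 r = {}"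
proof
  assume h: "r < nearest_dist S"
  show "S \<noteq> {} \<and> S \<inter> cball 0 r = {}"
  proof (intro conjI)
    show "S \<noteq> {}" using h r by (auto simp: nearest_dist_def infdist_def)
    show "S \<inter> cball 0 r = {}"
    proof (rule ccontr)
      assume "S \<inter> cball 0 r \<noteq> {}"
      then obtain p where p: "p \<in> S" "dist 0 p \<le> r" by auto
      have "infdist 0 S \<le> dist 0 p" using p(1) by (rule infdist_le)
      with p h show False by (simp add: nearest_dist_def)
    qed
  qed
next
  assume h: "S \<noteq> {} \<and> S \<inter> cball 0 r = {}"
  define F where "F = insert (r + 1) (norm ` (S \<inter> cball 0 (r + 1)))"
  have F: "finite F" unfolding F_def using locfin[of "cball 0 (r + 1)"] by simp
  have "r < x" if "x \<in> F" for x
    using that h by (auto simp: F_def dist_norm)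
  then have r_less: "r < Min F" using F by (simp add: F_def)
  have "Min F \<le> dist 0 p" if "p \<in> S" for p
  proof (cases "norm p \<le> r + 1")
    case True
    then have "norm p \<in> F" using that by (auto simp: F_def dist_norm)
    then show ?thesis using F by (simp add: dist_norm)
  next
    case False
    have "Min F \<le> r + 1" using F by (simp add: F_def)
    with False show ?thesis by (simp add: dist_norm)
  qed
  then have "Min F \<le> infdist 0 S"
    using h by (simp add: infdist_notempty cINF_greatest)
  with r_less show "r < nearest_dist S" by (simp add: nearest_dist_def)
qed

definition void_event :: "'w measure \<Rightarrow> ('w \<Rightarrow> (real^2) set) \<Rightarrow> real \<Rightarrow> 'w set" where
  "void_event M Phi r = {\<omega>\<in>space M. pcount (Phi \<omega>) (cball 0 r) = 0}"

text \<open>On this null event the nearest distance is the junk value infdist 0 {} = 0.\<close>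
definition empty_event :: "'w measure \<Rightarrow> ('w \<Rightarrow> (real^2) set) \<Rightarrow> 'w set" where
  "empty_event M Phi = (\<Inter>n::nat. void_event M Phi (real n))"

lemma homogeneous_PPP_prob_space: "homogeneous_PPP M lam Phi \<Longrightarrow> prob_space M"
  by (simp add: homogeneous_PPP_def)

lemma homogeneous_PPP_locally_finite:
  "homogeneous_PPP M lam Phi \<Longrightarrow> \<omega> \<in> space M \<Longrightarrow> bounded K \<Longrightarrow> finite (Phi \<omega> \<inter> K)"
  by (simp add: homogeneous_PPP_def)

lemma sets_void_event:
  assumes "homogeneous_PPP M lam Phi"
  shows "void_event M Phi r \<in> sets M"
proof -
  have "(\<lambda>\<omega>. pcount (Phi \<omega>) (cball 0 r)) \<in> measurable M (count_space UNIV)"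
    using assms unfolding homogeneous_PPP_def by auto
  from measurable_sets[OF this, of "{0}"] show ?thesis
    by (simp add: void_event_def vimage_def Int_def conj_commute)
qed

lemma prob_void_event:
  assumes "homogeneous_PPP M lam Phi" and "r \<ge> 0"
  shows "measure M (void_event M Phi r) = exp (- (pi * lam * r^2))"
proof -
  have "\<forall>n. measure M {\<omega>\<in>space M. pcount (Phi \<omega>) (cball 0 r) = n} =
      (lam * measure lborel (cball (0::real^2) r)) ^ n / fact n * exp (- (lam * measure lborel (cball (0::real^2) r)))"
    using assms(1) unfolding homogeneous_PPP_def by simp
  then have "measure M (void_event M Phi r) =
      (lam * measure lborel (cball (0::real^2) r)) ^ 0 / fact 0 * exp (- (lam * measure lborel (cball (0::real^2) r)))"
    unfolding void_event_def by blast
  then show ?thesis using assms(2) by (simp add: measure_cball_zero_real2 mult_ac)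
qed

lemma void_event_iff:
  assumes "homogeneous_PPP M lam Phi" and "\<omega> \<in> space M"
  shows "\<omega> \<in> void_event M Phi r \<longleftrightarrow> Phi \<omega> \<inter> cball 0 r = {}"
  using homogeneous_PPP_locally_finite[OF assms, of "cball 0 r"] assms(2)
  by (simp add: void_event_def pcount_def)

lemma sets_empty_event: "homogeneous_PPP M lam Phi \<Longrightarrow> empty_event M Phi \<in> sets M"
  unfolding empty_event_def by (intro sets.countable_INT') (auto intro: sets_void_event)

lemma empty_event_iff:
  assumes ppp: "homogeneous_PPP M lam Phi" and \<omega>: "\<omega> \<in> space M"
  shows "\<omega> \<in> empty_event M Phi \<longleftrightarrow> Phi \<omega> = {}"
proof
  assume "\<omega> \<in> empty_event M Phi"
  then have empty: "Phi \<omega> \<inter> cball 0 (real n) = {}" for n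
    using void_event_iff[OF ppp \<omega>] by (auto simp: empty_event_def)
  show "Phi \<omega> = {}"
  proof (rule ccontr)
    assume "Phi \<omega> \<noteq> {}"
    then obtain p where p: "p \<in> Phi \<omega>" by auto
    obtain n :: nat where "norm p \<le> real n" using real_arch_simple by blast
    with p empty[of n] show False by (auto simp: dist_norm)
  qed
qed (use void_event_iff[OF ppp \<omega>] \<omega> in \<open>auto simp: empty_event_def\<close>)

lemma empty_event_null:
  assumes ppp: "homogeneous_PPP M lam Phi" and lam: "lam > 0"
  shows "empty_event M Phi \<in> null_sets M"
proof -
  interpret prob_space M by (rule homogeneous_PPP_prob_space[OF ppp])
  have "prob (empty_event M Phi) \<le> exp (- (pi * lam * (real n)^2))" for n
  proof -
    have "prob (empty_event M Phi) \<le> prob (void_event M Phi (real n))"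
      by (rule finite_measure_mono) (auto simp: empty_event_def sets_void_event[OF ppp])
    then show ?thesis using prob_void_event[OF ppp, of "real n"] by simp
  qed
  moreover have "(\<lambda>n. exp (- (pi * lam * (real n)^2))) \<longlonglongrightarrow> 0"
    using lam by real_asymp
  ultimately have "prob (empty_event M Phi) \<le> 0"
    by (intro LIMSEQ_le_const) auto
  then have "prob (empty_event M Phi) = 0"
    using measure_nonneg[of M "empty_event M Phi"] by linarith
  then show ?thesis
    using sets_empty_event[OF ppp] by (simp add: emeasure_eq_measure null_sets_def)
qed

lemma greater_nearest_dist_event:
  assumes ppp: "homogeneous_PPP M lam Phi"
  shows "{\<omega>\<in>space M. a < nearest_dist (Phi \<omega>)} =
    (if a < 0 then space M else void_event M Phi a - empty_event M Phi)"
proof (cases "a < 0")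
  case True
  then show ?thesis using nearest_dist_nonneg by (auto intro: less_le_trans)
next
  case False
  have "a < nearest_dist (Phi \<omega>) \<longleftrightarrow> \<omega> \<in> void_event M Phi a - empty_event M Phi" if "\<omega> \<in> space M" for \<omega>
    using less_nearest_dist_iff[of "Phi \<omega>" a] homogeneous_PPP_locally_finite[OF ppp that] False
      void_event_iff[OF ppp that] empty_event_iff[OF ppp that] by auto
  then show ?thesis using False by (auto simp: void_event_def)
qed

lemma measurable_nearest_dist:
  assumes ppp: "homogeneous_PPP M lam Phi"
  shows "(\<lambda>\<omega>. nearest_dist (Phi \<omega>)) \<in> borel_measurable M"
  unfolding borel_measurable_iff_greater
  using greater_nearest_dist_event[OF ppp] sets_void_event[OF ppp] sets_empty_event[OF ppp] by auto

lemma prob_greater_nearest_dist: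
  assumes ppp: "homogeneous_PPP M lam Phi" and lam: "lam > 0"
  shows "measure M {\<omega>\<in>space M. a < nearest_dist (Phi \<omega>)} = (if a < 0 then 1 else exp (- (pi * lam * a^2)))"
proof -
  interpret prob_space M by (rule homogeneous_PPP_prob_space[OF ppp])
  show ?thesis
    using greater_nearest_dist_event[OF ppp, of a] prob_void_event[OF ppp, of a]
      measure_Diff_null_set[OF sets_void_event[OF ppp] empty_event_null[OF ppp lam]]
    by (simp add: prob_space)
qed

section \<open>The Rayleigh law of the nearest distance\<close>

definition rayleigh_density :: "real \<Rightarrow> real \<Rightarrow> real" where
  "rayleigh_density lam x = indicator {0<..} x * (2 * pi * lam * x * exp (- (pi * lam * x^2)))"

definition rayleigh :: "real \<Rightarrow> real measure" where
  "rayleigh lam = density lborel (\<lambda>x. ennreal (rayleigh_density lam x))"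

lemma borel_measurable_rayleigh_density[measurable]:
  "(\<lambda>x. ennreal (rayleigh_density lam x)) \<in> borel_measurable borel"
  unfolding rayleigh_density_def by measurable

lemma sets_rayleigh[simp, measurable_cong]: "sets (rayleigh lam) = sets borel"
  by (simp add: rayleigh_def)

lemma space_rayleigh[simp]: "space (rayleigh lam) = UNIV"
  by (simp add: rayleigh_def)

lemma rayleigh_density_times_exp:
  "rayleigh_density lam x * exp u / m = indicator {0<..} x * (2 * pi * lam / m * x * exp (u - pi * lam * x^2))"
  by (simp add: rayleigh_density_def exp_diff exp_minus field_simps)

lemma rayleigh_density_times_exp_minus:
  "rayleigh_density lam x * exp (- w) / m = indicator {0<..} x * (2 * pi * lam / m * x * exp (- pi * lam * x^2 - w))"
  by (simp add: rayleigh_density_def exp_diff exp_minus field_simps)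

lemma emeasure_rayleigh: "A \<in> sets borel \<Longrightarrow>
    emeasure (rayleigh lam) A = (\<integral>\<^sup>+x. ennreal (rayleigh_density lam x) * indicator A x \<partial>lborel)"
  unfolding rayleigh_def by (rule emeasure_density) auto

lemma emeasure_rayleigh_Int_pos:
  "A \<in> sets borel \<Longrightarrow> emeasure (rayleigh lam) A = emeasure (rayleigh lam) (A \<inter> {0<..})"
  by (simp add: emeasure_rayleigh) (auto intro!: nn_integral_cong simp: rayleigh_density_def indicator_def)

lemma emeasure_rayleigh_singleton[simp]: "emeasure (rayleigh lam) {t} = 0"
  unfolding rayleigh_def by (simp add: emeasure_density AE_lborel_singleton nn_integral_0_iff_AE)

lemma emeasure_rayleigh_atLeast:
  assumes lam: "lam > 0" and t: "t \<ge> 0"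
  shows "emeasure (rayleigh lam) {t..} = ennreal (exp (- (pi * lam * t^2)))"
proof -
  let ?g = "\<lambda>x::real. 2 * pi * lam * x * exp (- (pi * lam * x^2))"
  have "ennreal (rayleigh_density lam x) * indicator {t..} x = ennreal (?g x) * indicator {t..} x" for x
    using t by (cases "x = 0") (auto simp: rayleigh_density_def indicator_def)
  then have "emeasure (rayleigh lam) {t..} = (\<integral>\<^sup>+x. ennreal (?g x) * indicator {t..} x \<partial>lborel)"
    by (simp add: emeasure_rayleigh)
  also have "\<dots> = 0 - (- exp (- (pi * lam * t^2)))"
  proof (rule nn_integral_FTC_atLeast)
    show "DERIV (\<lambda>x. - exp (- (pi * lam * x^2))) x :> ?g x" for x
      by (rule derivative_eq_intros refl | simp)+
    show "((\<lambda>x. - exp (- (pi * lam * x^2))) \<longlongrightarrow> 0) at_top" using lam by real_asymp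
  qed (use t lam in auto)
  finally show ?thesis by simp
qed

lemma emeasure_rayleigh_greaterThan:
  assumes "lam > 0" and "t \<ge> 0"
  shows "emeasure (rayleigh lam) {t<..} = ennreal (exp (- (pi * lam * t^2)))"
proof -
  have "emeasure (rayleigh lam) {t<..} + emeasure (rayleigh lam) {t} = emeasure (rayleigh lam) ({t<..} \<union> {t})"
    by (rule plus_emeasure) auto
  also have "{t<..} \<union> {t} = {t..}" by auto
  finally show ?thesis using emeasure_rayleigh_atLeast[OF assms] by simp
qed

lemma prob_space_rayleigh: "lam > 0 \<Longrightarrow> prob_space (rayleigh lam)"
  by (rule prob_spaceI)
    (simp add: emeasure_rayleigh_Int_pos[of UNIV] emeasure_rayleigh_greaterThan[of lam 0])

lemma measure_rayleigh_greaterThan: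
  assumes lam: "lam > 0"
  shows "measure (rayleigh lam) {a<..} = (if a < 0 then 1 else exp (- (pi * lam * a^2)))"
proof (cases "a < 0")
  case True
  then have "{a<..} \<inter> {0<..} = {0::real<..}" by auto
  then show ?thesis using True emeasure_rayleigh_Int_pos[of "{a<..}" lam]
    emeasure_rayleigh_greaterThan[OF lam, of 0] by (simp add: measure_def)
qed (use emeasure_rayleigh_greaterThan[OF lam, of a] in \<open>simp add: measure_def\<close>)

lemma distr_nearest_dist:
  assumes ppp: "homogeneous_PPP M lam Phi" and lam: "lam > 0"
  shows "distr M borel (\<lambda>\<omega>. nearest_dist (Phi \<omega>)) = rayleigh lam"
proof -
  interpret prob_space M by (rule homogeneous_PPP_prob_space[OF ppp])
  interpret R: prob_space "rayleigh lam" by (rule prob_space_rayleigh[OF lam])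
  let ?D = "\<lambda>\<omega>. nearest_dist (Phi \<omega>)"
  have D[measurable]: "?D \<in> borel_measurable M" by (rule measurable_nearest_dist[OF ppp])
  show ?thesis
  proof (rule cdf_unique)
    show "real_distribution (distr M borel ?D)" by simp
    show "real_distribution (rayleigh lam)"
      by (simp add: real_distribution_def real_distribution_axioms_def R.prob_space_axioms)
    show "cdf (distr M borel ?D) = cdf (rayleigh lam)"
    proof
      fix x
      have "cdf (distr M borel ?D) x = prob (?D -` {..x} \<inter> space M)"
        unfolding cdf_def by (simp add: measure_distr)
      also have "?D -` {..x} \<inter> space M = space M - {\<omega>\<in>space M. x < ?D \<omega>}"
        by auto
      also have "prob \<dots> = 1 - measure (rayleigh lam) {x<..}"
        by (subst prob_compl) (simp_all add: prob_greater_nearest_dist[OF ppp lam]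
            measure_rayleigh_greaterThan[OF lam])
      also have "\<dots> = measure (rayleigh lam) (UNIV - {x<..})"
        using R.prob_compl[of "{x<..}"] by simp
      finally show "cdf (distr M borel ?D) x = cdf (rayleigh lam) x"
        by (simp add: cdf_def Compl_eq_Diff_UNIV[symmetric] not_less atMost_def)
    qed
  qed
qed

section \<open>Independence of the two nearest distances\<close>

text \<open>The upper half-lines generate the Borel sets and are closed under intersection, so
  independence of two real random variables reduces to the product rule for their tails.\<close>
lemma (in prob_space) indep_var_real_tailsI:
  fixes X Y :: "'a \<Rightarrow> real"
  assumes [measurable]: "X \<in> borel_measurable M" "Y \<in> borel_measurable M"
    and tails: "\<And>a b. prob ({\<omega>\<in>space M. a < X \<omega>} \<inter> {\<omega>\<in>space M. b < Y \<omega>}) =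
      prob {\<omega>\<in>space M. a < X \<omega>} * prob {\<omega>\<in>space M. b < Y \<omega>}"
  shows "indep_var borel X borel Y"
proof -
  define G where "G Z = range (\<lambda>a. {\<omega>\<in>space M. a < Z \<omega>})" for Z :: "'a \<Rightarrow> real"
  have generated: "sigma_sets (space M) {Z -` A \<inter> space M |A. A \<in> sets borel} = sigma_sets (space M) (G Z)"
    if "Z \<in> borel_measurable M" for Z
  proof -
    have "sets (borel :: real measure) = sigma_sets UNIV (range greaterThan)"
      by (subst borel_Ioi) simp
    then have "{Z -` A \<inter> space M |A. A \<in> sets borel} =
        sigma_sets (space M) {Z -` A \<inter> space M |A. A \<in> range greaterThan}"
      by (simp add: sigma_sets_vimage_commute)
    also have "{Z -` A \<inter> space M |A. A \<in> range greaterThan} = G Z"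
    proof -
      have "Z -` {a<..} \<inter> space M = {\<omega>\<in>space M. a < Z \<omega>}" for a by auto
      then show ?thesis unfolding G_def by blast
    qed
    finally show ?thesis
      by (simp only:) (rule sigma_sets_sigma_sets_eq, auto simp: G_def)
  qed
  have stable: "Int_stable (G Z)" for Z
  proof (rule Int_stableI)
    fix A B assume "A \<in> G Z" "B \<in> G Z"
    then obtain a b where "A = {\<omega>\<in>space M. a < Z \<omega>}" "B = {\<omega>\<in>space M. b < Z \<omega>}"
      by (auto simp: G_def)
    then show "A \<inter> B \<in> G Z" unfolding G_def by (intro image_eqI[where x="max a b"]) auto
  qed
  have "indep_set (G X) (G Y)"
    unfolding indep_sets2_eq G_def using tails by auto
  then have "indep_set (sigma_sets (space M) (G X)) (sigma_sets (space M) (G Y))"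
    by (intro indep_set_sigma_sets) (auto simp: G_def stable[unfolded G_def])
  then show ?thesis
    unfolding indep_var_eq by (simp add: generated)
qed

lemma prob_void_event_Int:
  assumes "prob_space M" and indep: "indep_PP M Phi1 Phi2"
  shows "measure M (void_event M Phi1 r \<inter> void_event M Phi2 s) =
    measure M (void_event M Phi1 r) * measure M (void_event M Phi2 s)"
proof -
  interpret prob_space M by (rule assms(1))
  let ?K = "PiM {0::nat} (\<lambda>_. count_space (UNIV::nat set))"
  let ?N1 = "\<lambda>\<omega>. \<lambda>i\<in>{0::nat}. pcount (Phi1 \<omega>) (cball 0 r)"
  let ?N2 = "\<lambda>\<omega>. \<lambda>j\<in>{0::nat}. pcount (Phi2 \<omega>) (cball 0 s)"
  define C where "C = (\<lambda>f. f 0) -` {0::nat} \<inter> space ?K"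
  have "indep_var ?K ?N1 ?K ?N2"
    using indep[unfolded indep_PP_def, rule_format, of "{0}" "{0}" "\<lambda>_. cball 0 r" "\<lambda>_. cball 0 s"]
    by simp
  moreover have "C \<in> sets ?K" unfolding C_def
    by (rule measurable_sets[OF measurable_component_singleton]) auto
  moreover have N1: "?N1 -` C \<inter> space M = void_event M Phi1 r"
    and N2: "?N2 -` C \<inter> space M = void_event M Phi2 s"
    by (auto simp: void_event_def C_def space_PiM PiE_def extensional_def)
  moreover have "(\<lambda>\<omega>. (?N1 \<omega>, ?N2 \<omega>)) -` (C \<times> C) \<inter> space M = void_event M Phi1 r \<inter> void_event M Phi2 s"
    using N1 N2 by blast
  ultimately show ?thesis
    using indep_varD[of ?K ?N1 ?K ?N2 C C] by (simp only:)
qed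

lemma indep_var_nearest_dist:
  assumes ppp1: "homogeneous_PPP M lam1 Phi1" and ppp2: "homogeneous_PPP M lam2 Phi2"
    and indep: "indep_PP M Phi1 Phi2" and lam: "lam1 > 0" "lam2 > 0"
  shows "prob_space.indep_var M borel (\<lambda>\<omega>. nearest_dist (Phi1 \<omega>)) borel (\<lambda>\<omega>. nearest_dist (Phi2 \<omega>))"
proof -
  interpret prob_space M by (rule homogeneous_PPP_prob_space[OF ppp1])
  show ?thesis
  proof (rule indep_var_real_tailsI)
    fix a b
    let ?T1 = "{\<omega>\<in>space M. a < nearest_dist (Phi1 \<omega>)}" and ?T2 = "{\<omega>\<in>space M. b < nearest_dist (Phi2 \<omega>)}"
    show "prob (?T1 \<inter> ?T2) = prob ?T1 * prob ?T2"
    proof (cases "a < 0 \<or> b < 0")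
      case True
      then have "?T1 = space M \<or> ?T2 = space M"
        using greater_nearest_dist_event[OF ppp1, of a] greater_nearest_dist_event[OF ppp2, of b] by auto
      then show ?thesis
        by (elim disjE) (simp_all add: prob_space Int_absorb1 Int_absorb2)
    next
      case False
      have "empty_event M Phi1 \<union> empty_event M Phi2 \<in> null_sets M"
        using empty_event_null[OF ppp1 lam(1)] empty_event_null[OF ppp2 lam(2)] by (rule null_sets.Un)
      then have "prob (void_event M Phi1 a \<inter> void_event M Phi2 b - (empty_event M Phi1 \<union> empty_event M Phi2)) =
          prob (void_event M Phi1 a \<inter> void_event M Phi2 b)"
        using sets_void_event[OF ppp1] sets_void_event[OF ppp2] by (intro measure_Diff_null_set) auto
      moreover have "?T1 \<inter> ?T2 =
          (void_event M Phi1 a \<inter> void_event M Phi2 b) - (empty_event M Phi1 \<union> empty_event M Phi2)"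
        using False greater_nearest_dist_event[OF ppp1, of a] greater_nearest_dist_event[OF ppp2, of b]
        by auto
      ultimately have "prob (?T1 \<inter> ?T2) = prob (void_event M Phi1 a \<inter> void_event M Phi2 b)"
        by simp
      also have "\<dots> = prob (void_event M Phi1 a) * prob (void_event M Phi2 b)"
        by (rule prob_void_event_Int[OF prob_space_axioms indep])
      finally show ?thesis
        using False prob_greater_nearest_dist[OF ppp1 lam(1), of a] prob_greater_nearest_dist[OF ppp2 lam(2), of b]
          prob_void_event[OF ppp1, of a] prob_void_event[OF ppp2, of b] by simp
    qed
  qed (use measurable_nearest_dist[OF ppp1] measurable_nearest_dist[OF ppp2] in auto)
qed

lemma distr_nearest_dist_pair:
  assumes ppp1: "homogeneous_PPP M lam1 Phi1" and ppp2: "homogeneous_PPP M lam2 Phi2"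
    and indep: "indep_PP M Phi1 Phi2" and lam: "lam1 > 0" "lam2 > 0"
  shows "distr M (borel \<Otimes>\<^sub>M borel) (\<lambda>\<omega>. (nearest_dist (Phi1 \<omega>), nearest_dist (Phi2 \<omega>))) =
    rayleigh lam1 \<Otimes>\<^sub>M rayleigh lam2"
proof -
  interpret prob_space M by (rule homogeneous_PPP_prob_space[OF ppp1])
  show ?thesis
    using indep_var_nearest_dist[OF assms] unfolding indep_var_distribution_eq
    by (simp add: distr_nearest_dist[OF ppp1 lam(1)] distr_nearest_dist[OF ppp2 lam(2)])
qed

section \<open>Power-law thresholds\<close>

lemma powr_le_powr_iff:
  fixes u v a :: real
  shows "0 < a \<Longrightarrow> 0 < u \<Longrightarrow> 0 < v \<Longrightarrow> u powr a \<le> v powr a \<longleftrightarrow> u \<le> v"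
  by (meson not_le powr_less_mono2 powr_mono2 less_imp_le)

lemma le_mult_powr_neg_iff:
  fixes c L a x :: real
  assumes "0 < c" "0 < L" "0 < a" "0 < x"
  shows "L \<le> c * x powr (-a) \<longleftrightarrow> x \<le> (c/L) powr (1/a)"
proof -
  have "x \<le> (c/L) powr (1/a) \<longleftrightarrow> x powr a \<le> ((c/L) powr (1/a)) powr a"
    using assms by (simp add: powr_le_powr_iff)
  also have "\<dots> \<longleftrightarrow> L \<le> c * x powr (-a)"
    using assms by (simp add: powr_powr powr_minus_divide le_divide_eq mult.commute)
  finally show ?thesis ..
qed

lemma less_mult_powr_neg_iff:
  fixes c L a x :: real
  assumes "0 < c" "0 < L" "0 < a" "0 < x"
  shows "L < c * x powr (-a) \<longleftrightarrow> x < (c/L) powr (1/a)"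
proof -
  have "x < (c/L) powr (1/a) \<longleftrightarrow> x powr a < ((c/L) powr (1/a)) powr a"
    using assms by (simp add: powr_le_powr_iff flip: not_le)
  also have "\<dots> \<longleftrightarrow> L < c * x powr (-a)"
    using assms by (simp add: powr_powr powr_minus_divide less_divide_eq mult.commute)
  finally show ?thesis ..
qed

lemma powr_div_mult_powr_neg:
  fixes c K b e x :: real
  assumes "0 < c" "0 < K" "0 < x"
  shows "(c / (K * x powr (-b))) powr e = (c/K) powr e * x powr (b * e)"
proof -
  have "c / (K * x powr (-b)) = (c/K) * x powr b"
    using assms by (simp add: powr_minus_divide)
  then show ?thesis
    using assms by (simp add: powr_divide powr_mult powr_powr mult_ac)
qed

lemma square_powr_inverse:
  fixes u a :: real
  assumes "0 < u"
  shows "(u powr (1/a))^2 = u powr (2/a)"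
proof -
  have "(u powr (1/a))^2 = (u powr (1/a)) powr 2"
    using assms by simp
  also have "\<dots> = u powr (2/a)"
    by (subst powr_powr) simp
  finally show ?thesis .
qed

lemma emeasure_rayleigh_power_le:
  assumes lam: "lam > 0" and "0 < c" "0 < L" "0 < a"
  shows "emeasure (rayleigh lam) {y. c * y powr (-a) \<le> L} = ennreal (exp (- (pi * lam * (c/L) powr (2/a))))"
proof -
  let ?t = "(c/L) powr (1/a)"
  have t: "0 < ?t" using assms by simp
  have "{y. c * y powr (-a) \<le> L} \<inter> {0<..} = {?t..}"
  proof (intro set_eqI iffI)
    fix y assume "y \<in> {y. c * y powr (-a) \<le> L} \<inter> {0<..}"
    then show "y \<in> {?t..}" using less_mult_powr_neg_iff[of c L a y] assms by (auto simp: not_less[symmetric])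
  next
    fix y assume "y \<in> {?t..}"
    then have "?t \<le> y" by simp
    with t have "0 < y" "?t \<le> y" by linarith+
    then show "y \<in> {y. c * y powr (-a) \<le> L} \<inter> {0<..}"
      using less_mult_powr_neg_iff[of c L a y] assms by auto
  qed
  then show ?thesis
    using assms t emeasure_rayleigh_Int_pos[of "{y. c * y powr (-a) \<le> L}" lam]
      emeasure_rayleigh_atLeast[OF lam, of ?t] by (simp add: square_powr_inverse)
qed

lemma emeasure_rayleigh_power_less:
  assumes lam: "lam > 0" and "0 < c" "0 < L" "0 < a"
  shows "emeasure (rayleigh lam) {y. c * y powr (-a) < L} = ennreal (exp (- (pi * lam * (c/L) powr (2/a))))"
proof -
  let ?t = "(c/L) powr (1/a)"
  have t: "0 < ?t" using assms by simp
  have "{y. c * y powr (-a) < L} \<inter> {0<..} = {?t<..}"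
  proof (intro set_eqI iffI)
    fix y assume "y \<in> {y. c * y powr (-a) < L} \<inter> {0<..}"
    then show "y \<in> {?t<..}" using le_mult_powr_neg_iff[of c L a y] assms by (auto simp: not_le[symmetric])
  next
    fix y assume "y \<in> {?t<..}"
    then have "?t < y" by simp
    with t have "0 < y" "?t < y" by linarith+
    then show "y \<in> {y. c * y powr (-a) < L} \<inter> {0<..}"
      using le_mult_powr_neg_iff[of c L a y] assms by auto
  qed
  then show ?thesis
    using assms t emeasure_rayleigh_Int_pos[of "{y. c * y powr (-a) < L}" lam]
      emeasure_rayleigh_greaterThan[OF lam, of ?t] by (simp add: square_powr_inverse)
qed

lemma emeasure_rayleigh_power_between:
  assumes lam: "lam > 0" and "0 < c" "0 < L2" "L2 < L1" "0 < a"
  shows "emeasure (rayleigh lam) {y. c * y powr (-a) < L1 \<and> L2 \<le> c * y powr (-a)} =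
    ennreal (exp (- (pi * lam * (c/L1) powr (2/a))) - exp (- (pi * lam * (c/L2) powr (2/a))))"
proof -
  let ?s1 = "(c/L1) powr (1/a)" and ?s2 = "(c/L2) powr (1/a)"
  have s1: "0 < ?s1" using assms by simp
  have s12: "?s1 \<le> ?s2"
    using assms by (intro powr_mono2) (auto intro: divide_left_mono)
  have "{y. c * y powr (-a) < L1 \<and> L2 \<le> c * y powr (-a)} \<inter> {0<..} = {?s1<..} - {?s2<..}"
  proof (intro set_eqI iffI)
    fix y assume "y \<in> {y. c * y powr (-a) < L1 \<and> L2 \<le> c * y powr (-a)} \<inter> {0<..}"
    then show "y \<in> {?s1<..} - {?s2<..}"
      using le_mult_powr_neg_iff[of c L1 a y] le_mult_powr_neg_iff[of c L2 a y] assms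
      by (auto simp: not_le[symmetric])
  next
    fix y assume "y \<in> {?s1<..} - {?s2<..}"
    then have "?s1 < y" "y \<le> ?s2" by auto
    with s1 have "0 < y" "?s1 < y" "y \<le> ?s2" by linarith+
    then show "y \<in> {y. c * y powr (-a) < L1 \<and> L2 \<le> c * y powr (-a)} \<inter> {0<..}"
      using le_mult_powr_neg_iff[of c L1 a y] le_mult_powr_neg_iff[of c L2 a y] assms by auto
  qed
  then have "emeasure (rayleigh lam) {y. c * y powr (-a) < L1 \<and> L2 \<le> c * y powr (-a)} =
      emeasure (rayleigh lam) ({?s1<..} - {?s2<..})"
    using emeasure_rayleigh_Int_pos[of "{y. c * y powr (-a) < L1 \<and> L2 \<le> c * y powr (-a)}" lam] by simp
  also have "\<dots> = emeasure (rayleigh lam) {?s1<..} - emeasure (rayleigh lam) {?s2<..}"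
    using s1 s12 emeasure_rayleigh_greaterThan[OF lam, of ?s2] by (intro emeasure_Diff) auto
  finally show ?thesis
    using assms s1 s12 emeasure_rayleigh_greaterThan[OF lam] by (simp add: square_powr_inverse ennreal_minus)
qed

section \<open>Conditional laws of the serving distance\<close>

lemma (in prob_space) distributed_uniform_measureI:
  fixes X :: "'a \<Rightarrow> real"
  assumes X[measurable]: "X \<in> borel_measurable M" and E: "E \<in> events"
    and [measurable]: "h \<in> borel_measurable borel"
    and event_integral: "\<And>A. A \<in> sets borel \<Longrightarrow>
      emeasure M ({\<omega>\<in>space M. X \<omega> \<in> A} \<inter> E) = (\<integral>\<^sup>+x. ennreal (h x) * indicator A x \<partial>lborel)"
  shows "distributed (uniform_measure M E) lborel X (\<lambda>x. ennreal (h x / prob E))"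
proof -
  have "measurable (uniform_measure M E) lborel = measurable M borel"
    by (rule measurable_cong_sets) simp_all
  then have X': "X \<in> measurable (uniform_measure M E) lborel"
    using X by simp
  have "distr (uniform_measure M E) lborel X = density lborel (\<lambda>x. ennreal (h x / prob E))"
  proof (rule measure_eqI)
    fix A assume "A \<in> sets (distr (uniform_measure M E) lborel X)"
    then have A[measurable]: "A \<in> sets borel" by simp
    have "emeasure (distr (uniform_measure M E) lborel X) A = emeasure (uniform_measure M E) (X -` A \<inter> space M)"
      using X' A by (simp add: emeasure_distr)
    also have "\<dots> = emeasure M (E \<inter> (X -` A \<inter> space M)) / emeasure M E"
      using E by simp
    also have "E \<inter> (X -` A \<inter> space M) = {\<omega>\<in>space M. X \<omega> \<in> A} \<inter> E" by auto
    also have "emeasure M \<dots> / emeasure M E = (\<integral>\<^sup>+x. ennreal (h x) * indicator A x \<partial>lborel) / emeasure M E"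
      by (simp only: event_integral[OF A])
    also have "\<dots> = (\<integral>\<^sup>+x. ennreal (h x / prob E) * indicator A x \<partial>lborel)"
    proof (cases "prob E = 0")
      case True
      have "(\<integral>\<^sup>+x. ennreal (h x) * indicator A x \<partial>lborel) \<le> emeasure M E"
        unfolding event_integral[OF A, symmetric] using E by (intro emeasure_mono) auto
      then show ?thesis using True by (simp add: emeasure_eq_measure)
    next
      case False
      then have m: "0 < prob E" using measure_nonneg[of M E] by linarith
      have "ennreal (h x / prob E) * indicator A x = ennreal (h x) * indicator A x * ennreal (1 / prob E)" for x
        using m by (cases "x \<in> A") (simp_all add: ennreal_mult'' divide_inverse)
      then have "(\<integral>\<^sup>+x. ennreal (h x / prob E) * indicator A x \<partial>lborel) =
          (\<integral>\<^sup>+x. ennreal (h x) * indicator A x \<partial>lborel) * ennreal (1 / prob E)"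
        by (simp add: nn_integral_multc)
      also have "\<dots> = (\<integral>\<^sup>+x. ennreal (h x) * indicator A x \<partial>lborel) / emeasure M E"
        using m by (simp add: emeasure_eq_measure divide_ennreal_def inverse_ennreal divide_inverse)
      finally show ?thesis by simp
    qed
    finally show "emeasure (distr (uniform_measure M E) lborel X) A =
        emeasure (density lborel (\<lambda>x. ennreal (h x / prob E))) A"
      by (simp add: emeasure_density)
  qed simp
  then show ?thesis
    unfolding distributed_def using X' by simp
qed

locale two_tier_distances = prob_space M
  for M :: "'w measure" and D1 D2 :: "'w \<Rightarrow> real" and lam1 lam2 :: real +
  assumes lam1_pos: "lam1 > 0" and lam2_pos: "lam2 > 0"
    and measurable_D1[measurable]: "D1 \<in> borel_measurable M"
    and measurable_D2[measurable]: "D2 \<in> borel_measurable M"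
    and distr_pair: "distr M (borel \<Otimes>\<^sub>M borel) (\<lambda>\<omega>. (D1 \<omega>, D2 \<omega>)) = rayleigh lam1 \<Otimes>\<^sub>M rayleigh lam2"
begin

lemma emeasure_pair_event:
  assumes [measurable]: "S \<in> sets (borel \<Otimes>\<^sub>M borel)"
  shows "emeasure M {\<omega>\<in>space M. (D1 \<omega>, D2 \<omega>) \<in> S} = emeasure (rayleigh lam1 \<Otimes>\<^sub>M rayleigh lam2) S"
proof -
  have "{\<omega>\<in>space M. (D1 \<omega>, D2 \<omega>) \<in> S} = (\<lambda>\<omega>. (D1 \<omega>, D2 \<omega>)) -` S \<inter> space M" by auto
  then show ?thesis by (simp add: emeasure_distr flip: distr_pair)
qed

lemma emeasure_event_D1:
  assumes [measurable]: "Measurable.pred (borel \<Otimes>\<^sub>M borel) Q" "A \<in> sets borel"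
    and slice: "\<And>x. 0 < x \<Longrightarrow> emeasure (rayleigh lam2) {y. Q (x, y)} = ennreal (g x)"
  shows "emeasure M ({\<omega>\<in>space M. D1 \<omega> \<in> A} \<inter> {\<omega>\<in>space M. Q (D1 \<omega>, D2 \<omega>)}) =
    (\<integral>\<^sup>+x. ennreal (rayleigh_density lam1 x * g x) * indicator A x \<partial>lborel)"
proof -
  interpret R2: prob_space "rayleigh lam2" by (rule prob_space_rayleigh[OF lam2_pos])
  define S where "S = {p \<in> space (borel \<Otimes>\<^sub>M borel). fst p \<in> A \<and> Q p}"
  have S[measurable]: "S \<in> sets (borel \<Otimes>\<^sub>M borel)" unfolding S_def by measurable
  have "emeasure M ({\<omega>\<in>space M. D1 \<omega> \<in> A} \<inter> {\<omega>\<in>space M. Q (D1 \<omega>, D2 \<omega>)}) =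
      emeasure (rayleigh lam1 \<Otimes>\<^sub>M rayleigh lam2) S"
    by (subst emeasure_pair_event[OF S, symmetric]) (auto simp: S_def space_pair_measure intro!: arg_cong[where f="emeasure M"])
  also have "\<dots> = (\<integral>\<^sup>+x. emeasure (rayleigh lam2) (Pair x -` S) \<partial>rayleigh lam1)"
    by (rule R2.emeasure_pair_measure_alt) simp
  also have "\<dots> = (\<integral>\<^sup>+x. ennreal (rayleigh_density lam1 x) * emeasure (rayleigh lam2) (Pair x -` S) \<partial>lborel)"
    unfolding rayleigh_def[of lam1]
    using R2.measurable_emeasure_Pair[of S] by (intro nn_integral_density) (simp_all add: measurable_cong_sets[OF sets_rayleigh refl])
  also have "\<dots> = (\<integral>\<^sup>+x. ennreal (rayleigh_density lam1 x * g x) * indicator A x \<partial>lborel)"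
  proof (rule nn_integral_cong)
    fix x :: real
    show "ennreal (rayleigh_density lam1 x) * emeasure (rayleigh lam2) (Pair x -` S) =
        ennreal (rayleigh_density lam1 x * g x) * indicator A x"
    proof (cases "0 < x")
      case True
      have "Pair x -` S = (if x \<in> A then {y. Q (x, y)} else {})"
        by (auto simp: S_def space_pair_measure)
      then show ?thesis
        using True slice[OF True] lam1_pos by (simp add: ennreal_mult' rayleigh_density_def)
    qed (simp add: rayleigh_density_def)
  qed
  finally show ?thesis .
qed

lemma emeasure_event_D2:
  assumes [measurable]: "Measurable.pred (borel \<Otimes>\<^sub>M borel) Q" "A \<in> sets borel"
    and slice: "\<And>y. 0 < y \<Longrightarrow> emeasure (rayleigh lam1) {x. Q (x, y)} = ennreal (g y)"
  shows "emeasure M ({\<omega>\<in>space M. D2 \<omega> \<in> A} \<inter> {\<omega>\<in>space M. Q (D1 \<omega>, D2 \<omega>)}) =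
    (\<integral>\<^sup>+y. ennreal (rayleigh_density lam2 y * g y) * indicator A y \<partial>lborel)"
proof -
  interpret R1: prob_space "rayleigh lam1" by (rule prob_space_rayleigh[OF lam1_pos])
  interpret R2: prob_space "rayleigh lam2" by (rule prob_space_rayleigh[OF lam2_pos])
  interpret pair_prob_space "rayleigh lam1" "rayleigh lam2" ..
  define S where "S = {p \<in> space (borel \<Otimes>\<^sub>M borel). snd p \<in> A \<and> Q p}"
  have S[measurable]: "S \<in> sets (borel \<Otimes>\<^sub>M borel)" unfolding S_def by measurable
  have "emeasure M ({\<omega>\<in>space M. D2 \<omega> \<in> A} \<inter> {\<omega>\<in>space M. Q (D1 \<omega>, D2 \<omega>)}) =
      emeasure (rayleigh lam1 \<Otimes>\<^sub>M rayleigh lam2) S"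
    by (subst emeasure_pair_event[OF S, symmetric]) (auto simp: S_def space_pair_measure intro!: arg_cong[where f="emeasure M"])
  also have "\<dots> = (\<integral>\<^sup>+y. emeasure (rayleigh lam1) ((\<lambda>x. (x, y)) -` S) \<partial>rayleigh lam2)"
    by (rule emeasure_pair_measure_alt2) simp
  also have "\<dots> = (\<integral>\<^sup>+y. ennreal (rayleigh_density lam2 y) * emeasure (rayleigh lam1) ((\<lambda>x. (x, y)) -` S) \<partial>lborel)"
    unfolding rayleigh_def[of lam2]
    using measurable_emeasure_Pair2[of S] by (intro nn_integral_density) (simp_all add: measurable_cong_sets[OF sets_rayleigh refl])
  also have "\<dots> = (\<integral>\<^sup>+y. ennreal (rayleigh_density lam2 y * g y) * indicator A y \<partial>lborel)"
  proof (rule nn_integral_cong)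
    fix y :: real
    show "ennreal (rayleigh_density lam2 y) * emeasure (rayleigh lam1) ((\<lambda>x. (x, y)) -` S) =
        ennreal (rayleigh_density lam2 y * g y) * indicator A y"
    proof (cases "0 < y")
      case True
      have "(\<lambda>x. (x, y)) -` S = (if y \<in> A then {x. Q (x, y)} else {})"
        by (auto simp: S_def space_pair_measure)
      then show ?thesis
        using True slice[OF True] lam2_pos by (simp add: ennreal_mult' rayleigh_density_def)
    qed (simp add: rayleigh_density_def)
  qed
  finally show ?thesis .
qed

lemma distributed_D1_given_macro:
  fixes P1 P2 a1 a2 B :: real
  assumes "0 < P1" "0 < P2" "0 < a1" "0 < a2" "0 < B"
  defines "E \<equiv> {\<omega>\<in>space M. P1 * D1 \<omega> powr (- a1) \<ge> P2 * B * D2 \<omega> powr (- a2)}"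
  shows "distributed (uniform_measure M E) lborel D1
    (\<lambda>x. ennreal (indicator {0<..} x * (2 * pi * lam1 / measure M E * x *
       exp (- pi * lam1 * x\<^sup>2 - pi * lam2 * (P2 * B / P1) powr (2 / a2) * x powr (2 * a1 / a2)))))"
proof -
  define g where "g x = exp (- (pi * lam2 * (P2 * B / P1) powr (2 / a2) * x powr (2 * a1 / a2)))" for x
  have "emeasure M ({\<omega>\<in>space M. D1 \<omega> \<in> A} \<inter> E) =
      (\<integral>\<^sup>+x. ennreal (rayleigh_density lam1 x * g x) * indicator A x \<partial>lborel)" if "A \<in> sets borel" for A
  proof -
    have "emeasure (rayleigh lam2) {y. P2 * B * y powr (- a2) \<le> P1 * x powr (- a1)} = ennreal (g x)" if "0 < x" for x
      using emeasure_rayleigh_power_le[OF lam2_pos, of "P2 * B" "P1 * x powr (- a1)" a2]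
        powr_div_mult_powr_neg[of "P2 * B" P1 x a1 "2 / a2"] assms that by (simp add: g_def ac_simps)
    then show ?thesis
      using emeasure_event_D1[where Q="\<lambda>p. P2 * B * snd p powr (- a2) \<le> P1 * fst p powr (- a1)", OF _ that]
      by (simp add: E_def)
  qed
  then have "distributed (uniform_measure M E) lborel D1 (\<lambda>x. ennreal (rayleigh_density lam1 x * g x / prob E))"
    by (intro distributed_uniform_measureI) (simp_all add: E_def g_def rayleigh_density_def)
  then show ?thesis
    by (simp add: rayleigh_density_times_exp_minus g_def)
qed

lemma distributed_D2_given_small_cell:
  fixes P1 P2 a1 a2 B :: real
  assumes "0 < P1" "0 < P2" "0 < a1" "0 < a2" "0 < B"
  defines "E \<equiv> {\<omega>\<in>space M. P2 * B * D2 \<omega> powr (- a2) > P1 * D1 \<omega> powr (- a1)}"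
  shows "distributed (uniform_measure M E) lborel D2
    (\<lambda>y. ennreal (indicator {0<..} y * (2 * pi * lam2 / measure M E * y *
       exp (- pi * lam1 * (P1 / (P2 * B)) powr (2 / a1) * y powr (2 * a2 / a1) - pi * lam2 * y\<^sup>2))))"
proof -
  define g where "g y = exp (- pi * lam1 * (P1 / (P2 * B)) powr (2 / a1) * y powr (2 * a2 / a1))" for y
  have "emeasure M ({\<omega>\<in>space M. D2 \<omega> \<in> A} \<inter> E) =
      (\<integral>\<^sup>+y. ennreal (rayleigh_density lam2 y * g y) * indicator A y \<partial>lborel)" if "A \<in> sets borel" for A
  proof -
    have "emeasure (rayleigh lam1) {x. P1 * x powr (- a1) < P2 * B * y powr (- a2)} = ennreal (g y)" if "0 < y" for y
      using emeasure_rayleigh_power_less[OF lam1_pos, of P1 "P2 * B * y powr (- a2)" a1]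
        powr_div_mult_powr_neg[of P1 "P2 * B" y a2 "2 / a1"] assms that by (simp add: g_def ac_simps)
    then show ?thesis
      using emeasure_event_D2[where Q="\<lambda>p. P1 * fst p powr (- a1) < P2 * B * snd p powr (- a2)", OF _ that]
      by (simp add: E_def)
  qed
  then have "distributed (uniform_measure M E) lborel D2 (\<lambda>y. ennreal (rayleigh_density lam2 y * g y / prob E))"
    by (intro distributed_uniform_measureI) (simp_all add: E_def g_def rayleigh_density_def)
  then show ?thesis
    by (simp add: rayleigh_density_times_exp g_def)
qed

lemma distributed_D2_given_offloaded:
  fixes P1 P2 a1 a2 B1 B2 :: real
  assumes "0 < P1" "0 < P2" "0 < a1" "0 < a2" "B2 < B1" "0 < B2"
  defines "E \<equiv> {\<omega>\<in>space M. P2 * B1 * D2 \<omega> powr (- a2) > P1 * D1 \<omega> powr (- a1) \<and>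
                             P1 * D1 \<omega> powr (- a1) \<ge> P2 * B2 * D2 \<omega> powr (- a2)}"
  shows "distributed (uniform_measure M E) lborel D2
    (\<lambda>y. ennreal (indicator {0<..} y * (2 * pi * lam2 / measure M E * y *
       (exp (- pi * lam1 * (P1 / (P2 * B1)) powr (2 / a1) * y powr (2 * a2 / a1) - pi * lam2 * y\<^sup>2)
      - exp (- pi * lam1 * (P1 / (P2 * B2)) powr (2 / a1) * y powr (2 * a2 / a1) - pi * lam2 * y\<^sup>2)))))"
proof -
  define g where "g B y = exp (- pi * lam1 * (P1 / (P2 * B)) powr (2 / a1) * y powr (2 * a2 / a1))" for B y
  have "emeasure M ({\<omega>\<in>space M. D2 \<omega> \<in> A} \<inter> E) =
      (\<integral>\<^sup>+y. ennreal (rayleigh_density lam2 y * (g B1 y - g B2 y)) * indicator A y \<partial>lborel)" if "A \<in> sets borel" for A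
  proof -
    have "emeasure (rayleigh lam1) {x. P1 * x powr (- a1) < P2 * B1 * y powr (- a2) \<and> P2 * B2 * y powr (- a2) \<le> P1 * x powr (- a1)} =
        ennreal (g B1 y - g B2 y)" if "0 < y" for y
      using emeasure_rayleigh_power_between[OF lam1_pos, of P1 "P2 * B2 * y powr (- a2)" "P2 * B1 * y powr (- a2)" a1]
        powr_div_mult_powr_neg[of P1 "P2 * B1" y a2 "2 / a1"] powr_div_mult_powr_neg[of P1 "P2 * B2" y a2 "2 / a1"]
        assms that by (simp add: g_def ac_simps)
    then show ?thesis
      using emeasure_event_D2[where Q="\<lambda>p. P1 * fst p powr (- a1) < P2 * B1 * snd p powr (- a2) \<and>
          P2 * B2 * snd p powr (- a2) \<le> P1 * fst p powr (- a1)", OF _ that]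
      by (simp add: E_def)
  qed
  then have "distributed (uniform_measure M E) lborel D2
      (\<lambda>y. ennreal (rayleigh_density lam2 y * (g B1 y - g B2 y) / prob E))"
    by (intro distributed_uniform_measureI) (simp_all add: E_def g_def rayleigh_density_def)
  then show ?thesis
    by (simp add: rayleigh_density_times_exp g_def right_diff_distrib diff_divide_distrib)
qed

end

theorem lemma2:
  fixes M :: "'w measure"
    and Phi1 Phi2 :: "'w \<Rightarrow> (real^2) set"
    and lam1 lam2 P1 P2 a1 a2 B1 B2 :: real
  assumes ppp1: "homogeneous_PPP M lam1 Phi1"
    and ppp2: "homogeneous_PPP M lam2 Phi2"
    and indep: "indep_PP M Phi1 Phi2"
    and pos: "lam1 > 0" "lam2 > 0" "P1 > 0" "P2 > 0" "a1 > 0" "a2 > 0"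
    and bias: "B1 > B2" "B2 > 0"
  defines "E1 \<equiv> {\<omega>\<in>space M. P1 * nearest_dist (Phi1 \<omega>) powr (- a1) \<ge> P2 * B1 * nearest_dist (Phi2 \<omega>) powr (- a2)}"
    and "ED \<equiv> {\<omega>\<in>space M. P2 * B1 * nearest_dist (Phi2 \<omega>) powr (- a2) > P1 * nearest_dist (Phi1 \<omega>) powr (- a1) \<and>
                             P1 * nearest_dist (Phi1 \<omega>) powr (- a1) \<ge> P2 * B2 * nearest_dist (Phi2 \<omega>) powr (- a2)}"
    and "EDb \<equiv> {\<omega>\<in>space M. P2 * B2 * nearest_dist (Phi2 \<omega>) powr (- a2) > P1 * nearest_dist (Phi1 \<omega>) powr (- a1)}"
  shows
    "distributed (uniform_measure M E1) lborel (\<lambda>\<omega>. nearest_dist (Phi1 \<omega>))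
       (\<lambda>x. ennreal (indicator {0<..} x *
          (2 * pi * lam1 / measure M E1 * x *
           exp (- pi * lam1 * x\<^sup>2 - pi * lam2 * (P2 * B1 / P1) powr (2 / a2) * x powr (2 * a1 / a2))))) \<and>
     distributed (uniform_measure M EDb) lborel (\<lambda>\<omega>. nearest_dist (Phi2 \<omega>))
       (\<lambda>x. ennreal (indicator {0<..} x *
          (2 * pi * lam2 / measure M EDb * x *
           exp (- pi * lam1 * (P1 / (P2 * B2)) powr (2 / a1) * x powr (2 * a2 / a1) - pi * lam2 * x\<^sup>2)))) \<and>
     distributed (uniform_measure M ED) lborel (\<lambda>\<omega>. nearest_dist (Phi2 \<omega>))
       (\<lambda>x. ennreal (indicator {0<..} x *
          (2 * pi * lam2 / measure M ED * x *
           (exp (- pi * lam1 * (P1 / (P2 * B1)) powr (2 / a1) * x powr (2 * a2 / a1) - pi * lam2 * x\<^sup>2)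
          - exp (- pi * lam1 * (P1 / (P2 * B2)) powr (2 / a1) * x powr (2 * a2 / a1) - pi * lam2 * x\<^sup>2)))))"
proof -
  interpret two_tier_distances M "\<lambda>\<omega>. nearest_dist (Phi1 \<omega>)" "\<lambda>\<omega>. nearest_dist (Phi2 \<omega>)" lam1 lam2
    using homogeneous_PPP_prob_space[OF ppp1] pos(1,2) measurable_nearest_dist[OF ppp1]
      measurable_nearest_dist[OF ppp2] distr_nearest_dist_pair[OF ppp1 ppp2 indep pos(1,2)]
    by (simp add: two_tier_distances_def two_tier_distances_axioms_def)
  have "0 < B1" using bias by simp
  then show ?thesis
    unfolding E1_def ED_def EDb_def using pos bias
    by (intro conjI distributed_D1_given_macro distributed_D2_given_small_cell distributed_D2_given_offloaded)
qed

end
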